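(* If $\mathcal I$ is a P-ideal on $\omega$, then $\mathfrak b_\sigma(\mathcal I)=\mathfrak b_s(\mathrm{Fin},\mathcal I,\mathcal I)=\min\{\mathfrak b,\mathrm{add}^*(\mathcal I)\}\le\mathrm{add}_\omega(\mathcal I)$.
   Context: An ideal on $\omega$ is a family $\mathcal I\subseteq\mathcal P(\omega)$ closed under finite unions and subsets, containing all finite sets, with $\omega\notin\mathcal I$; $\mathrm{Fin}$ is the ideal of finite subsets of $\omega$. $\mathcal I$ is a P-ideal if for every countable $\mathcal A\subseteq\mathcal I$ there is $B\in\mathcal I$ with $A\setminus B$ finite for all $A\in\mathcal A$. $\mathfrak b$ is the least size of a subset of $\omega^\omega$ unbounded with respect to eventual domination $\le^*$. Convention $\min\emptyset=\infty$, $\kappa<\infty$ for every cardinal. $\widehat{\mathcal P}_{\mathcal I}$ = sequences $(A_n)\in\mathcal I^\omega$ of pairwise disjoint sets; $\mathcal P_{\mathcal I}$ = those with $\bigcup_nA_n=\omega$; $\mathcal M_{\mathcal I}$ = sequences $(E_k)\in\mathcal I^\omega$ with $E_k\subseteq E_{k+1}$. $\mathfrak b_s(\mathcal I,\mathcal J,\mathcal K)=\min\{|\mathcal E|:\mathcal E\subseteq\widehat{\mathcal P}_{\mathcal K}$ and for every $(A_n)\in\mathcal P_{\mathcal J}$ there is $(E_n)\in\mathcal E$ with $\bigcup_n(A_{n+1}\cap\bigcup_{i\le n}E_i)\notin\mathcal I\}$; $\mathfrak b_\sigma(\mathcal I)=\min\{|\mathcal E|:\mathcal E\subseteq\mathcal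 M_{\mathcal I}$ and for every $(A_n)\in\mathcal M_{\mathcal I}$ there is $(E_n)\in\mathcal E$ with $E_n\not\subseteq A_n$ for infinitely many $n\}$; $\mathrm{add}_\omega(\mathcal I)=\min\{|\mathcal A|:\mathcal A\subseteq\mathcal I$ and for every $(B_n)\in\mathcal I^\omega$ there is $A\in\mathcal A$ with $A\not\subseteq B_n$ for all $n\}$; $\mathrm{add}^*(\mathcal I)=\min\{|\mathcal A|:\mathcal A\subseteq\mathcal I$ and for every $B\in\mathcal I$ there is $A\in\mathcal A$ with $A\setminus B$ infinite$\}$. *)

theory Defs
  imports Main "HOL-Library.Countable_Set"
begin

definition ideal_on_nat :: "nat set set \<Rightarrow> bool" where
  "ideal_on_nat I \<longleftrightarrow>
     (\<forall>A\<in>I. \<forall>B\<in>I. A \<union> B \<in> I) \<and>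
     (\<forall>A\<in>I. \<forall>B. B \<subseteq> A \<longrightarrow> B \<in> I) \<and>
     (\<forall>A. finite A \<longrightarrow> A \<in> I) \<and>
     UNIV \<notin> I"

definition Fin :: "nat set set" where
  "Fin = {A. finite A}"

definition P_ideal :: "nat set set \<Rightarrow> bool" where
  "P_ideal I \<longleftrightarrow> ideal_on_nat I \<and>
     (\<forall>\<A>. countable \<A> \<and> \<A> \<subseteq> I \<longrightarrow> (\<exists>B\<in>I. \<forall>A\<in>\<A>. finite (A - B)))"

definition Phat :: "nat set set \<Rightarrow> (nat \<Rightarrow> nat set) set" where
  "Phat K = {A. (\<forall>n. A n \<in> K) \<and> (\<forall>n m. n \<noteq> m \<longrightarrow> A n \<inter> A m = {})}"

definition Ppart :: "nat set set \<Rightarrow> (nat \<Rightarrow> nat set) set" where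
  "Ppart K = {A. A \<in> Phat K \<and> (\<Union>n. A n) = UNIV}"

definition Mseq :: "nat set set \<Rightarrow> (nat \<Rightarrow> nat set) set" where
  "Mseq I = {E. (\<forall>k. E k \<in> I) \<and> (\<forall>k. E k \<subseteq> E (Suc k))}"

text \<open>Each cardinal invariant is the minimum of the cardinalities of the families in its
  witness class (min of empty class = infinity).\<close>

definition le_star :: "(nat \<Rightarrow> nat) \<Rightarrow> (nat \<Rightarrow> nat) \<Rightarrow> bool" where
  "le_star f g \<longleftrightarrow> (\<exists>N. \<forall>n\<ge>N. f n \<le> g n)"

definition b_wit :: "(nat \<Rightarrow> nat) set set" where
  "b_wit = {F. \<not> (\<exists>g. \<forall>f\<in>F. le_star f g)}"

definition bs_wit :: "nat set set \<Rightarrow> nat set set \<Rightarrow> nat set set \<Rightarrow> (nat \<Rightarrow> nat set) set set" where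
  "bs_wit I J K = {\<E>. \<E> \<subseteq> Phat K \<and>
     (\<forall>A\<in>Ppart J. \<exists>E\<in>\<E>. (\<Union>n. A (Suc n) \<inter> (\<Union>i\<le>n. E i)) \<notin> I)}"

definition bsigma_wit :: "nat set set \<Rightarrow> (nat \<Rightarrow> nat set) set set" where
  "bsigma_wit I = {\<E>. \<E> \<subseteq> Mseq I \<and>
     (\<forall>A\<in>Mseq I. \<exists>E\<in>\<E>. infinite {n. \<not> E n \<subseteq> A n})}"

definition addomega_wit :: "nat set set \<Rightarrow> nat set set set" where
  "addomega_wit I = {\<A>. \<A> \<subseteq> I \<and>
     (\<forall>B. (\<forall>n. B n \<in> I) \<longrightarrow> (\<exists>A\<in>\<A>. \<forall>n::nat. \<not> A \<subseteq> B n))}"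

definition addstar_wit :: "nat set set \<Rightarrow> nat set set set" where
  "addstar_wit I = {\<A>. \<A> \<subseteq> I \<and> (\<forall>B\<in>I. \<exists>A\<in>\<A>. infinite (A - B))}"

text \<open>inv_le W1 W2 says min{|E| : E in W1} <= min{|E| : E in W2}, with min of the empty
  class being infinity (larger than every cardinal).\<close>

definition inv_le :: "'a set set \<Rightarrow> 'b set set \<Rightarrow> bool" where
  "inv_le W1 W2 \<longleftrightarrow> (\<forall>E\<in>W2. \<exists>E'\<in>W1. (card_of E', card_of E) \<in> ordLeq)"

definition inv_eq :: "'a set set \<Rightarrow> 'b set set \<Rightarrow> bool" where
  "inv_eq W1 W2 \<longleftrightarrow> inv_le W1 W2 \<and> inv_le W2 W1"

text \<open>Witness class whose minimum is min of the two minima (disjoint-union lift).\<close>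

definition inv_min :: "'a set set \<Rightarrow> 'b set set \<Rightarrow> ('a + 'b) set set" where
  "inv_min W1 W2 = (\<lambda>E. Inl ` E) ` W1 \<union> (\<lambda>E. Inr ` E) ` W2"

end

(* Let m = min {b, add*(I)}.  Partial-sum sequences {..f 0 + ... + f n} of an unbounded family
   of functions, and constant sequences of a family witnessing add*(I), give b_sigma(I) <= m; for
   the latter, the P-property puts all terms of an increasing sequence in I almost inside one
   set of I.  Disjointifying the members of a b_sigma-family gives b_s(Fin,I,I) <= b_sigma(I).
   Conversely, take fewer than m sequences in I.  Their partial unions, fewer than add*(I) sets
   (or countably many, where the P-property applies), have a pseudo-union B in I, and the fewer
   than b functions measuring how far they stick out of B are dominated by a single g.  So every
   partial union is eventually contained in B \<union> {..g n}, and the disjointification of this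
   increasing sequence is a partition defeating the family: m <= b_s(Fin,I,I).  Finally
   add*(I) <= add_omega(I) because each B \<union> {..n} lies in I. *)

theory Submission
  imports Defs "HOL-Library.Disjoint_Sets"
begin

unbundle cardinal_syntax

lemma ideal_on_natD:
  assumes "ideal_on_nat I"
  shows ideal_Un: "\<And>A B. A \<in> I \<Longrightarrow> B \<in> I \<Longrightarrow> A \<union> B \<in> I"
    and ideal_subset: "\<And>A B. A \<in> I \<Longrightarrow> B \<subseteq> A \<Longrightarrow> B \<in> I"
    and ideal_finite: "\<And>A. finite A \<Longrightarrow> A \<in> I"
    and ideal_ne_UNIV: "\<And>A. A \<in> I \<Longrightarrow> A \<noteq> UNIV"
  using assms unfolding ideal_on_nat_def by blast+

lemma P_idealD:
  assumes "P_ideal I"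
  shows P_ideal_ideal: "ideal_on_nat I"
    and P_ideal_pseudo_union: "\<And>\<A>. countable \<A> \<Longrightarrow> \<A> \<subseteq> I \<Longrightarrow> \<exists>B\<in>I. \<forall>A\<in>\<A>. finite (A - B)"
  using assms unfolding P_ideal_def by blast+

lemma ideal_UN_atMost:
  fixes C :: "nat \<Rightarrow> nat set"
  assumes "ideal_on_nat I" "\<And>i. C i \<in> I"
  shows "(\<Union>i\<le>n. C i) \<in> I"
proof (induction n)
  case (Suc n)
  then show ?case
    using assms by (simp add: atMost_Suc ideal_Un)
qed (simp add: assms)

lemma ideal_Un_atMost:
  assumes "ideal_on_nat I" "B \<in> I"
  shows "B \<union> {..n} \<in> I"
  using assms by (simp add: ideal_Un ideal_finite)

lemma Mseq_iff: "E \<in> Mseq I \<longleftrightarrow> (\<forall>k. E k \<in> I) \<and> mono E"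
  by (simp add: Mseq_def mono_iff_le_Suc)

lemma UN_atMost_disjointed: "mono A \<Longrightarrow> (\<Union>i\<le>n. disjointed A i) = A n"
  using finite_UN_disjointed_eq[of A "Suc n"] mono_imp_UN_eq_last[of A n]
  by (simp add: atLeast0LessThan lessThan_Suc_atMost)

lemma disjointed_in_Phat:
  assumes "ideal_on_nat I" "\<And>n. S n \<in> I"
  shows "disjointed S \<in> Phat I"
  using assms disjoint_family_disjointed[of S] disjointed_subset[of S]
  unfolding Phat_def disjoint_family_on_def by (blast intro: ideal_subset)

lemma disjointed_in_Ppart:
  assumes "ideal_on_nat I" "\<And>n. S n \<in> I" "(\<Union>n. S n) = UNIV"
  shows "disjointed S \<in> Ppart I"
  using assms disjointed_in_Phat UN_disjointed_eq[of S] unfolding Ppart_def by simp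

lemma inv_le_trans: "inv_le A B \<Longrightarrow> inv_le B C \<Longrightarrow> inv_le A C"
  unfolding inv_le_def using ordLeq_transitive by blast

lemma inv_le_image:
  assumes "\<And>E. E \<in> W2 \<Longrightarrow> \<phi> ` E \<in> W1"
  shows "inv_le W1 W2"
  unfolding inv_le_def using assms card_of_image by blast

lemma inv_le_subset: "W2 \<subseteq> W1 \<Longrightarrow> inv_le W1 W2"
  using inv_le_image[of W2 "\<lambda>x. x" W1] by auto

lemma inv_min_le_right: "inv_le (inv_min W1 W2) W2"
  by (rule inv_le_image[where \<phi> = Inr]) (simp add: inv_min_def)

lemma le_inv_min:
  assumes "inv_le W W1" "inv_le W W2"
  shows "inv_le W (inv_min W1 W2)"
  unfolding inv_le_def
proof
  fix E assume "E \<in> inv_min W1 W2"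
  then consider F where "F \<in> W1" "E = Inl ` F" | F where "F \<in> W2" "E = Inr ` F"
    unfolding inv_min_def by blast
  then show "\<exists>E'\<in>W. |E'| \<le>o |E|"
  proof cases
    case 1
    then obtain E' where "E' \<in> W" "|E'| \<le>o |F|"
      using assms(1) unfolding inv_le_def by blast
    then show ?thesis
      using 1 card_of_ordLeqI[of Inl F "Inl ` F"] ordLeq_transitive by auto
  next
    case 2
    then obtain E' where "E' \<in> W" "|E'| \<le>o |F|"
      using assms(2) unfolding inv_le_def by blast
    then show ?thesis
      using 2 card_of_ordLeqI[of Inr F "Inr ` F"] ordLeq_transitive by auto
  qed
qed

lemma bsigma_le_b:
  assumes "ideal_on_nat I"
  shows "inv_le (bsigma_wit I) b_wit"
proof (rule inv_le_image[where \<phi> = "\<lambda>f n. {..\<Sum>i\<le>n. f i}"])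
  fix F assume F: "F \<in> b_wit"
  let ?\<E> = "(\<lambda>f n. {..\<Sum>i\<le>n. f i}) ` F"
  have "(\<lambda>n. {..\<Sum>i\<le>n. f i}) \<in> Mseq I" for f :: "nat \<Rightarrow> nat"
    using assms by (simp add: Mseq_def ideal_finite)
  then have "?\<E> \<subseteq> Mseq I"
    by blast
  moreover have "\<exists>E\<in>?\<E>. infinite {n. \<not> E n \<subseteq> A n}" if "A \<in> Mseq I" for A
  proof -
    have "\<forall>n. \<exists>x. x \<notin> A n"
      using that ideal_ne_UNIV[OF assms] unfolding Mseq_def by blast
    then obtain h where h: "\<And>n. h n \<notin> A n"
      by metis
    obtain f where f: "f \<in> F" "\<not> le_star f h"
      using F unfolding b_wit_def by blast
    have "\<exists>n\<ge>m. n \<in> {n. \<not> {..\<Sum>i\<le>n. f i} \<subseteq> A n}" for m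
    proof -
      obtain n where "n \<ge> m" "h n < f n"
        using f(2) unfolding le_star_def by (meson not_le)
      moreover have "f n \<le> (\<Sum>i\<le>n. f i)"
        by (rule member_le_sum) auto
      ultimately have "h n \<in> {..\<Sum>i\<le>n. f i}"
        by simp
      then show ?thesis
        using h[of n] \<open>n \<ge> m\<close> by blast
    qed
    then have "infinite {n. \<not> {..\<Sum>i\<le>n. f i} \<subseteq> A n}"
      unfolding infinite_nat_iff_unbounded_le by blast
    then show ?thesis
      using f(1) by (intro bexI[of _ "\<lambda>n. {..\<Sum>i\<le>n. f i}"]) auto
  qed
  ultimately show "?\<E> \<in> bsigma_wit I"
    unfolding bsigma_wit_def by blast
qed

lemma bsigma_le_addstar:
  assumes "P_ideal I"
  shows "inv_le (bsigma_wit I) (addstar_wit I)"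
proof (rule inv_le_image[where \<phi> = "\<lambda>A n. A"])
  fix \<A> assume \<A>: "\<A> \<in> addstar_wit I"
  let ?\<E> = "(\<lambda>A n. A) ` \<A>"
  have "?\<E> \<subseteq> Mseq I"
    using \<A> by (auto simp: Mseq_def addstar_wit_def)
  moreover have "\<exists>E\<in>?\<E>. infinite {n. \<not> E n \<subseteq> S n}" if "S \<in> Mseq I" for S
  proof -
    obtain B where "B \<in> I" and B: "\<And>n. finite (S n - B)"
      using P_ideal_pseudo_union[OF assms, of "range S"] \<open>S \<in> Mseq I\<close>
      by (auto simp: Mseq_def)
    then obtain A where "A \<in> \<A>" "infinite (A - B)"
      using \<A> unfolding addstar_wit_def by blast
    then have "\<not> A \<subseteq> S n" for n
      using B[of n] by (meson Diff_mono finite_subset order_refl)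
    then show ?thesis
      using \<open>A \<in> \<A>\<close> by (intro bexI[of _ "\<lambda>n. A"]) simp_all
  qed
  ultimately show "?\<E> \<in> bsigma_wit I"
    unfolding bsigma_wit_def by blast
qed

lemma finite_uncovered_if_finite_shifted_inter:
  fixes A E :: "nat \<Rightarrow> 'a set"
  assumes "mono E" "(\<Union>n. A n) = UNIV" "finite (\<Union>n. A (Suc n) \<inter> E n)"
  shows "finite {n. \<not> E n \<subseteq> (\<Union>i\<le>n. A i)}"
proof -
  let ?U = "\<Union>n. A (Suc n) \<inter> E n"
  obtain N where N: "?U \<subseteq> (\<Union>i<N. A i)"
    using finite_countable_subset[OF assms(3), of A] assms(2) by blast
  have covered: "E n \<subseteq> (\<Union>i\<le>n. A i)" if "N \<le> n" for n
  proof
    fix y assume "y \<in> E n"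
    obtain k where "y \<in> A k"
      using assms(2) by blast
    show "y \<in> (\<Union>i\<le>n. A i)"
    proof (cases "k \<le> n")
      case True
      then show ?thesis
        using \<open>y \<in> A k\<close> by blast
    next
      case False
      then obtain j where "k = Suc j" "n \<le> j"
        by (cases k) auto
      then have "y \<in> ?U"
        using \<open>y \<in> A k\<close> \<open>y \<in> E n\<close> monoD[OF assms(1), of n j] by blast
      then obtain i where "i < N" "y \<in> A i"
        using N by blast
      then show ?thesis
        using that by auto
    qed
  qed
  have "n < N" if "\<not> E n \<subseteq> (\<Union>i\<le>n. A i)" for n
    using covered[of n] that by (meson not_le)
  then have "{n. \<not> E n \<subseteq> (\<Union>i\<le>n. A i)} \<subseteq> {..<N}"
    by blast
  then show ?thesis
    using finite_subset by blast
qed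

lemma bs_le_bsigma:
  assumes "ideal_on_nat I"
  shows "inv_le (bs_wit Fin I I) (bsigma_wit I)"
proof (rule inv_le_image[where \<phi> = disjointed])
  fix \<E> assume \<E>: "\<E> \<in> bsigma_wit I"
  have increasing: "\<And>E. E \<in> \<E> \<Longrightarrow> (\<forall>k. E k \<in> I) \<and> mono E"
    using \<E> unfolding bsigma_wit_def by (auto simp: Mseq_iff)
  then have "disjointed ` \<E> \<subseteq> Phat I"
    using disjointed_in_Phat[OF assms] by blast
  moreover have "\<exists>D\<in>disjointed ` \<E>. (\<Union>n. A (Suc n) \<inter> (\<Union>i\<le>n. D i)) \<notin> Fin"
    if "A \<in> Ppart I" for A
  proof -
    have A: "\<And>n. A n \<in> I" "(\<Union>n. A n) = UNIV"
      using that unfolding Ppart_def Phat_def by auto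
    have partial_unions: "(\<lambda>n. \<Union>i\<le>n. A i) \<in> Mseq I"
      unfolding Mseq_def using ideal_UN_atMost[OF assms A(1)] by (simp add: atMost_Suc)
    have "\<forall>S\<in>Mseq I. \<exists>E\<in>\<E>. infinite {n. \<not> E n \<subseteq> S n}"
      using \<E> unfolding bsigma_wit_def by blast
    from bspec[OF this partial_unions]
    obtain E where E: "E \<in> \<E>" "infinite {n. \<not> E n \<subseteq> (\<Union>i\<le>n. A i)}"
      by blast
    then have "infinite (\<Union>n. A (Suc n) \<inter> E n)"
      using finite_uncovered_if_finite_shifted_inter[of E A] increasing A(2) by blast
    then have "(\<Union>n. A (Suc n) \<inter> (\<Union>i\<le>n. disjointed E i)) \<notin> Fin"
      using UN_atMost_disjointed[of E] increasing[OF E(1)] unfolding Fin_def by simp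
    then show ?thesis
      using E(1) by blast
  qed
  ultimately show "disjointed ` \<E> \<in> bs_wit Fin I I"
    unfolding bs_wit_def by blast
qed

lemma pseudo_union_or_addstar_wit:
  fixes s :: "'x \<Rightarrow> nat \<Rightarrow> nat set"
  assumes "P_ideal I" "\<And>x n. x \<in> X \<Longrightarrow> s x n \<in> I"
  obtains B where "B \<in> I" "\<And>x n. x \<in> X \<Longrightarrow> finite (s x n - B)"
    | \<A> where "\<A> \<in> addstar_wit I" "|\<A>| \<le>o |X|"
proof -
  let ?\<A> = "case_prod s ` (X \<times> UNIV)"
  have "?\<A> \<subseteq> I"
    using assms(2) by auto
  show thesis
  proof (cases "\<exists>B\<in>I. \<forall>A\<in>?\<A>. finite (A - B)")
    case True
    then obtain B where "B \<in> I" "\<forall>A\<in>?\<A>. finite (A - B)"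
      by blast
    then show ?thesis
      by (intro that(1)) auto
  next
    case False
    then have "?\<A> \<in> addstar_wit I"
      using \<open>?\<A> \<subseteq> I\<close> unfolding addstar_wit_def by auto
    have "infinite X"
    proof
      assume "finite X"
      then have "countable ?\<A>"
        by (auto intro: countable_finite)
      then show False
        using P_ideal_pseudo_union[OF assms(1)] \<open>?\<A> \<subseteq> I\<close> False by blast
    qed
    then have "|X \<times> (UNIV :: nat set)| =o |X|"
      using card_of_Times_infinite[of X "UNIV :: nat set"] infinite_iff_card_of_nat by auto
    then have "|?\<A>| \<le>o |X|"
      using card_of_image ordLeq_ordIso_trans by blast
    with \<open>?\<A> \<in> addstar_wit I\<close> show ?thesis
      by (rule that(2))
  qed
qed

lemma b_wit_or_eventually_bounded:
  fixes s :: "'x \<Rightarrow> nat \<Rightarrow> nat set"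
  assumes "\<And>x n. x \<in> X \<Longrightarrow> finite (s x n - B)"
  obtains F where "F \<in> b_wit" "|F| \<le>o |X|"
    | g where "mono g" "\<And>n. n \<le> g n" "\<And>x. x \<in> X \<Longrightarrow> \<exists>N. \<forall>n\<ge>N. s x n \<subseteq> B \<union> {..g n}"
proof -
  define f where "f x n = Max (insert 0 (s x n - B))" for x n
  have s_bound: "s x n \<subseteq> B \<union> {..f x n}" if "x \<in> X" for x n
    using assms[OF that, of n] unfolding f_def by auto
  show thesis
  proof (cases "f ` X \<in> b_wit")
    case True
    then show ?thesis
      using that(1) card_of_image by blast
  next
    case False
    then obtain g0 where g0: "\<And>x. x \<in> X \<Longrightarrow> le_star (f x) g0"
      unfolding b_wit_def by blast
    define g where "g n = (\<Sum>i\<le>n. g0 i) + n" for n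
    have "mono g"
      unfolding mono_iff_le_Suc g_def by simp
    moreover have "n \<le> g n" for n
      unfolding g_def by simp
    moreover have "\<exists>N. \<forall>n\<ge>N. s x n \<subseteq> B \<union> {..g n}" if x: "x \<in> X" for x
    proof -
      obtain N where N: "\<And>n. N \<le> n \<Longrightarrow> f x n \<le> g0 n"
        using g0[OF x] unfolding le_star_def by blast
      have "s x n \<subseteq> B \<union> {..g n}" if "N \<le> n" for n
      proof -
        have "g0 n \<le> (\<Sum>i\<le>n. g0 i)"
          by (rule member_le_sum) auto
        then have "f x n \<le> g n"
          using N[OF that] unfolding g_def by linarith
        then show ?thesis
          using s_bound[OF x, of n] by auto
      qed
      then show ?thesis
        by blast
    qed
    ultimately show ?thesis
      using that(2) by blast
  qed
qed

lemma P_ideal_eventually_bounded_or_inv_min: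
  fixes s :: "'x \<Rightarrow> nat \<Rightarrow> nat set"
  assumes "P_ideal I" "\<And>x n. x \<in> X \<Longrightarrow> s x n \<in> I"
  obtains W where "W \<in> inv_min b_wit (addstar_wit I)" "|W| \<le>o |X|"
    | B g where "B \<in> I" "mono g" "\<And>n. n \<le> g n"
      "\<And>x. x \<in> X \<Longrightarrow> \<exists>N. \<forall>n\<ge>N. s x n \<subseteq> B \<union> {..g n}"
proof (rule pseudo_union_or_addstar_wit[OF assms])
  fix \<A> assume "\<A> \<in> addstar_wit I" "|\<A>| \<le>o |X|"
  then show thesis
    using that(1)[of "Inr ` \<A>"] card_of_image[of Inr \<A>] ordLeq_transitive
    by (auto simp: inv_min_def)
next
  fix B assume "B \<in> I" and B: "\<And>x n. x \<in> X \<Longrightarrow> finite (s x n - B)"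
  show thesis
  proof (rule b_wit_or_eventually_bounded[OF B])
    fix F assume "F \<in> b_wit" "|F| \<le>o |X|"
    then show thesis
      using that(1)[of "Inl ` F"] card_of_image[of Inl F] ordLeq_transitive
      by (auto simp: inv_min_def)
  next
    fix g assume "mono g" "\<And>n. n \<le> g n"
      "\<And>x. x \<in> X \<Longrightarrow> \<exists>N. \<forall>n\<ge>N. s x n \<subseteq> B \<union> {..g n}"
    then show thesis
      using that(2) \<open>B \<in> I\<close> by blast
  qed
qed

lemma UN_disjointed_Suc_inter_subset:
  fixes S T :: "nat \<Rightarrow> 'a set"
  assumes "mono S" "\<And>n. N \<le> n \<Longrightarrow> T n \<subseteq> S n"
  shows "(\<Union>n. disjointed S (Suc n) \<inter> T n) \<subseteq> S N - S 0"
proof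
  fix y assume "y \<in> (\<Union>n. disjointed S (Suc n) \<inter> T n)"
  then obtain n where y: "y \<in> S (Suc n)" "y \<notin> S n" "y \<in> T n"
    using disjointed_mono[OF assms(1)] by auto
  then have "Suc n \<le> N"
    using assms(2)[of n] by (meson not_less_eq_eq subsetD)
  then show "y \<in> S N - S 0"
    using y monoD[OF assms(1), of "Suc n" N] monoD[OF assms(1), of 0 n] by blast
qed

lemma inv_min_le_bs:
  assumes "P_ideal I"
  shows "inv_le (inv_min b_wit (addstar_wit I)) (bs_wit Fin I I)"
  unfolding inv_le_def
proof
  fix \<E> assume \<E>: "\<E> \<in> bs_wit Fin I I"
  have ideal: "ideal_on_nat I"
    using P_ideal_ideal[OF assms] .
  have "\<And>E k. E \<in> \<E> \<Longrightarrow> E k \<in> I"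
    using \<E> unfolding bs_wit_def Phat_def by blast
  then have partial_unions: "\<And>E n. E \<in> \<E> \<Longrightarrow> (\<Union>i\<le>n. E i) \<in> I"
    using ideal_UN_atMost[OF ideal] by blast
  show "\<exists>W\<in>inv_min b_wit (addstar_wit I). |W| \<le>o |\<E>|"
  proof (rule P_ideal_eventually_bounded_or_inv_min[OF assms partial_unions])
    fix W assume "W \<in> inv_min b_wit (addstar_wit I)" "|W| \<le>o |\<E>|"
    then show ?thesis ..
  next
    fix B g assume "B \<in> I" "mono g" "\<And>n. n \<le> g n" and
      bounded: "\<And>E. E \<in> \<E> \<Longrightarrow> \<exists>N. \<forall>n\<ge>N. (\<Union>i\<le>n. E i) \<subseteq> B \<union> {..g n}"
    define S where "S n = B \<union> {..g n}" for n
    have "mono S"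
    proof
      fix m n :: nat
      assume "m \<le> n"
      with \<open>mono g\<close> have "g m \<le> g n"
        by (rule monoD)
      then show "S m \<subseteq> S n"
        unfolding S_def by auto
    qed
    have "(\<Union>n. S n) = UNIV"
      using \<open>\<And>n. n \<le> g n\<close> unfolding S_def by blast
    then have "disjointed S \<in> Ppart I"
      by (intro disjointed_in_Ppart[OF ideal]) (simp_all add: S_def ideal_Un_atMost[OF ideal \<open>B \<in> I\<close>])
    moreover have "\<forall>A\<in>Ppart I. \<exists>E\<in>\<E>. (\<Union>n. A (Suc n) \<inter> (\<Union>i\<le>n. E i)) \<notin> Fin"
      using \<E> unfolding bs_wit_def by blast
    ultimately have "\<exists>E\<in>\<E>. (\<Union>n. disjointed S (Suc n) \<inter> (\<Union>i\<le>n. E i)) \<notin> Fin"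
      by (rule bspec[rotated])
    then obtain E where "E \<in> \<E>"
      and infinite: "infinite (\<Union>n. disjointed S (Suc n) \<inter> (\<Union>i\<le>n. E i))"
      unfolding Fin_def by blast
    obtain N where "\<forall>n\<ge>N. (\<Union>i\<le>n. E i) \<subseteq> S n"
      using bounded[OF \<open>E \<in> \<E>\<close>] unfolding S_def by blast
    then have "(\<Union>n. disjointed S (Suc n) \<inter> (\<Union>i\<le>n. E i)) \<subseteq> S N - S 0"
      by (intro UN_disjointed_Suc_inter_subset[OF \<open>mono S\<close>]) simp
    also have "\<dots> \<subseteq> {..g N}"
      unfolding S_def by blast
    finally show ?thesis
      using infinite finite_subset by blast
  qed
qed

lemma addomega_wit_subset_addstar_wit:
  assumes "ideal_on_nat I"
  shows "addomega_wit I \<subseteq> addstar_wit I"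
proof
  fix \<A> assume \<A>: "\<A> \<in> addomega_wit I"
  have "\<exists>A\<in>\<A>. infinite (A - B)" if "B \<in> I" for B
  proof -
    have "\<forall>C. (\<forall>n. C n \<in> I) \<longrightarrow> (\<exists>A\<in>\<A>. \<forall>n::nat. \<not> A \<subseteq> C n)"
      using \<A> unfolding addomega_wit_def by blast
    from this[rule_format, of "\<lambda>n. B \<union> {..n}"]
    obtain A where "A \<in> \<A>" and A: "\<And>n. \<not> A \<subseteq> B \<union> {..n}"
      using ideal_Un_atMost[OF assms \<open>B \<in> I\<close>] by blast
    have "infinite (A - B)"
    proof
      assume "finite (A - B)"
      then obtain n where "A - B \<subseteq> {..n}"
        using finite_nat_iff_bounded_le by blast
      then show False
        using A[of n] by blast
    qed
    then show ?thesis
      using \<open>A \<in> \<A>\<close> by blast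
  qed
  then show "\<A> \<in> addstar_wit I"
    using \<A> unfolding addomega_wit_def addstar_wit_def by blast
qed

theorem corollary5p9:
  fixes I :: "nat set set"
  assumes "P_ideal I"
  shows "inv_eq (bsigma_wit I) (bs_wit Fin I I)
       \<and> inv_eq (bs_wit Fin I I) (inv_min b_wit (addstar_wit I))
       \<and> inv_le (inv_min b_wit (addstar_wit I)) (addomega_wit I)"
proof -
  have ideal: "ideal_on_nat I"
    using P_ideal_ideal[OF assms] .
  have bsigma_le_min: "inv_le (bsigma_wit I) (inv_min b_wit (addstar_wit I))"
    using le_inv_min[OF bsigma_le_b[OF ideal] bsigma_le_addstar[OF assms]] .
  note bs_le_bsigma = bs_le_bsigma[OF ideal]
    and min_le_bs = inv_min_le_bs[OF assms]
  have min_le_addomega: "inv_le (inv_min b_wit (addstar_wit I)) (addomega_wit I)"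
    using inv_le_trans[OF inv_min_le_right inv_le_subset[OF addomega_wit_subset_addstar_wit[OF ideal]]] .
  show ?thesis
    unfolding inv_eq_def
    using inv_le_trans[OF bsigma_le_min min_le_bs] inv_le_trans[OF bs_le_bsigma bsigma_le_min]
      bs_le_bsigma min_le_bs min_le_addomega by blast
qed

end
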